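(* Let $M\subseteq\mathbb{R}^n$ be convex, $D\subseteq\mathbb{R}^n$ discrete, and $F=F_{\mathrm{QC}^n,M\cap D}$. Then $\tau_F\ge |M\cap D|-1$.
   Context: $\mathrm{QC}^n$: quasiconvex functions $f$ with convex domain in $\mathbb{R}^n$, i.e. $f(z)\le\max\{f(x),f(y)\}$ for all $x,y\in\mathrm{dom}(f)$ and $z\in(x,y)$. For a class $\mathscr{F}$ and discrete set $D'$, the problem $F=F_{\mathscr{F},D'}$ has instances $\mathrm{dom}(F)=\{f\in\mathscr{F}: D'\subseteq\mathrm{dom}(f)\}$ and asks for a point of $\arg\min_{x\in D'}f(x)$, where $f$ is accessible only through the comparison oracle answering, for $x,y\in\mathrm{dom}(f)$, whether $f(x)\le f(y)$. An algorithm is a binary decision tree whose internal nodes are comparison queries on pairs of points and whose leaves are labelled by points; it solves $F$ if for every $f\in\mathrm{dom}(F)$ all queried points lie in $\mathrm{dom}(f)$ and the reached leaf is labelled by a point of $\arg\min_{D'}f$. $\tau_F$ is the minimum, over all algorithms solving $F$, of the maximal number of queries on a root-to-leaf path (worst-case number of oracle calls). *)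

theory Defs
  imports "HOL-Analysis.Analysis" "HOL-Library.Extended_Nat"
begin

definition discrete_set :: "(real^'n) set \<Rightarrow> bool" where
  "discrete_set D \<longleftrightarrow> (\<forall>x\<in>D. \<exists>e>0. \<forall>y\<in>D. y \<noteq> x \<longrightarrow> e \<le> dist y x)"

definition quasiconvex_on :: "(real^'n) set \<Rightarrow> (real^'n \<Rightarrow> real) \<Rightarrow> bool" where
  "quasiconvex_on C f \<longleftrightarrow> convex C \<and>
     (\<forall>x\<in>C. \<forall>y\<in>C. \<forall>z\<in>open_segment x y. f z \<le> max (f x) (f y))"

text \<open>Comparison-oracle algorithms: binary decision trees. Node x y l r queries
  whether f x \<le> f y, continuing in l if yes and in r otherwise.\<close>
datatype 'a dtree = Leaf 'a | Node 'a 'a "'a dtree" "'a dtree"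

fun depth :: "'a dtree \<Rightarrow> nat" where
  "depth (Leaf p) = 0"
| "depth (Node x y l r) = Suc (max (depth l) (depth r))"

fun queries_in :: "'a set \<Rightarrow> ('a \<Rightarrow> real) \<Rightarrow> 'a dtree \<Rightarrow> bool" where
  "queries_in C f (Leaf p) = True"
| "queries_in C f (Node x y l r) =
     (x \<in> C \<and> y \<in> C \<and> (if f x \<le> f y then queries_in C f l else queries_in C f r))"

fun run :: "('a \<Rightarrow> real) \<Rightarrow> 'a dtree \<Rightarrow> 'a" where
  "run f (Leaf p) = p"
| "run f (Node x y l r) = (if f x \<le> f y then run f l else run f r)"

definition is_argmin_on :: "('a \<Rightarrow> real) \<Rightarrow> 'a set \<Rightarrow> 'a \<Rightarrow> bool" where
  "is_argmin_on f S p \<longleftrightarrow> p \<in> S \<and> (\<forall>y\<in>S. f p \<le> f y)"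

definition solves_QC :: "(real^'n) set \<Rightarrow> (real^'n) dtree \<Rightarrow> bool" where
  "solves_QC D' T \<longleftrightarrow> (\<forall>C f. quasiconvex_on C f \<and> D' \<subseteq> C \<longrightarrow>
      queries_in C f T \<and> is_argmin_on f D' (run f T))"

text \<open>Worst-case oracle complexity tau_F (\<infinity> if no algorithm solves F).\<close>
definition tau_QC :: "(real^'n) set \<Rightarrow> enat" where
  "tau_QC D' = (INF T \<in> {T. solves_QC D' T}. enat (depth T))"

end

theory Submission
  imports Defs
begin

text \<open>Adversary argument: answer every query \<open>f x \<le> f y\<close> with yes, as the constant function
  does. Along this run a tree of depth \<open>d\<close> puts at most \<open>d\<close> points on the right-hand side of
  a query. For a point \<open>p\<close> never put there, the quasiconvex spike function that is \<open>-1\<close> at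
  \<open>p\<close> and \<open>0\<close> elsewhere gives the same answers, so the algorithm ends at the same leaf,
  which must then be \<open>p\<close>. Hence at most one point of \<open>M \<inter> D\<close> escapes these \<open>d\<close> points.\<close>

fun rhs_on_yes_path :: "'a dtree \<Rightarrow> 'a set" where
  "rhs_on_yes_path (Leaf p) = {}"
| "rhs_on_yes_path (Node x y l r) = insert y (rhs_on_yes_path l)"

lemma finite_rhs_on_yes_path: "finite (rhs_on_yes_path T)"
  by (induction T) auto

lemma card_rhs_on_yes_path_le_depth: "card (rhs_on_yes_path T) \<le> depth T"
proof (induction T)
  case (Node x y l r)
  then show ?case
    by (auto simp: card_insert_if finite_rhs_on_yes_path)
qed simp

definition spike :: "'a \<Rightarrow> 'a \<Rightarrow> real" where
  "spike p x = (if x = p then -1 else 0)"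

lemma quasiconvex_on_spike: "quasiconvex_on UNIV (spike (p :: real^'n))"
  unfolding quasiconvex_on_def spike_def
  by (auto simp: open_segment_def)

lemma run_spike_eq_run_const:
  "p \<notin> rhs_on_yes_path T \<Longrightarrow> run (spike p) T = run (\<lambda>_. 0) T"
  by (induction T) (auto simp: spike_def)

lemma solves_QC_run_spike:
  assumes "solves_QC S T" and "p \<in> S"
  shows "run (spike p) T = p"
proof -
  have "is_argmin_on (spike p) S (run (spike p) T)"
    using assms(1) quasiconvex_on_spike unfolding solves_QC_def by blast
  then have "spike p (run (spike p) T) \<le> spike p p"
    using assms(2) unfolding is_argmin_on_def by blast
  then show ?thesis by (auto simp: spike_def split: if_splits)
qed

lemma solves_QC_subset_rhs_on_yes_path:
  assumes "solves_QC S T"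
  shows "S \<subseteq> insert (run (\<lambda>_. 0) T) (rhs_on_yes_path T)"
  using solves_QC_run_spike[OF assms] run_spike_eq_run_const by fastforce

lemma solves_QC_card_le_Suc_depth:
  assumes "solves_QC S T"
  shows "finite S" and "card S \<le> Suc (depth T)"
proof -
  let ?R = "insert (run (\<lambda>_. 0) T) (rhs_on_yes_path T)"
  have "finite ?R" by (simp add: finite_rhs_on_yes_path)
  then show "finite S"
    using solves_QC_subset_rhs_on_yes_path[OF assms] finite_subset by blast
  have "card S \<le> card ?R"
    using \<open>finite ?R\<close> solves_QC_subset_rhs_on_yes_path[OF assms] by (rule card_mono)
  also have "\<dots> \<le> Suc (card (rhs_on_yes_path T))"
    by (simp add: card_insert_if finite_rhs_on_yes_path)
  also have "\<dots> \<le> Suc (depth T)"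
    using card_rhs_on_yes_path_le_depth by simp
  finally show "card S \<le> Suc (depth T)" .
qed

theorem mainTheorem8:
  fixes M D :: "(real^'n) set"
  assumes "convex M" and "discrete_set D"
  shows "tau_QC (M \<inter> D) \<ge> (if finite (M \<inter> D) then enat (card (M \<inter> D) - 1) else \<infinity>)"
  unfolding tau_QC_def
proof (rule INF_greatest)
  fix T assume "T \<in> {T. solves_QC (M \<inter> D) T}"
  then have "finite (M \<inter> D)" and "card (M \<inter> D) - 1 \<le> depth T"
    using solves_QC_card_le_Suc_depth by fastforce+
  then show "(if finite (M \<inter> D) then enat (card (M \<inter> D) - 1) else \<infinity>) \<le> enat (depth T)"
    by simp
qed

end
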